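(* Let $\mathcal Z=(Z\to\mathbf P_{M/m})$, $\mathcal Y=(Y\to\mathbf P_{L/l})$, $\mathcal X=(X\to\mathbf P_{K/k})$ be objects of $\mathrm{bir}_G$ and let $h\colon\mathcal Z\to\mathcal Y$, $g\colon\mathcal Y\to\mathcal X$ be morphisms, $f=g\circ h$. Then: (1) if $g$ and $h$ are separated, $f$ is separated; (2) if $f$ is separated, $h$ is separated; (3) if $g$ and $h$ are proper, $f$ is proper; (4) if $f$ and $h$ are proper, $g$ is proper; (5) if $f$ is proper, $g$ is separated and $\psi_{M/m,L/l}$ is surjective (e.g. $m=l$), then $h$ is proper; (6) if $f$ is separated and $h$ is proper, then $g$ is separated.
   Context: $G$ is a commutative multiplicative group. Graded fields: nonzero $G$-graded rings whose nonzero homogeneous elements are invertible. For graded fields $k\subseteq K$, $\mathbf P_{K/k}$ is the set of graded valuation rings $\mathcal O$ of $K$ containing $k$ (graded subrings such that $f\in\mathcal O$ or $f^{-1}\in\mathcal O$ for each nonzero homogeneous $f\in K$), with topology generated by $\{\mathcal O: f_1,\dots,f_n\in\mathcal O\}$, $f_i$ homogeneous. An object of $\mathrm{bir}_G$ is $(X\to\mathbf P_{K/k})$ for some graded field extension $K/k$, with $X\to\mathbf P_{K/k}$ a local homeomorphism from a non-empty connected quasi-compact quasi-separated space. A morphism $(Y\to\mathbf P_{L/l})\to(X\to\mathbf P_{K/k})$ consists of compatible graded embeddings $k\hookrightarrow l$, $K\hookrightarrow L$ (compatible with $k\subseteq K$, $l\subseteq L$) and a continuous map $Y\to X$ compatible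 with $\psi_{L/l,K/k}\colon\mathbf P_{L/l}\to\mathbf P_{K/k}$, $\mathcal O\mapsto\mathcal O\cap K$. It is separated if $Y\to X\times_{\mathbf P_{K/k}}\mathbf P_{L/l}$ is injective, and proper if this map is bijective and $\psi_{L/l,K/k}$ is surjective. *)

theory Defs
  imports "HOL-Analysis.Analysis" "HOL-Algebra.Algebra"
begin

definition is_decomp ::
  "('g, 'x) monoid_scheme \<Rightarrow> ('a, 'm) ring_scheme \<Rightarrow> ('g \<Rightarrow> 'a set) \<Rightarrow> 'a \<Rightarrow> ('g \<Rightarrow> 'a) \<Rightarrow> bool" where
  "is_decomp \<Gamma> R D x c \<longleftrightarrow>
     (\<forall>\<gamma>. \<gamma> \<notin> carrier \<Gamma> \<longrightarrow> c \<gamma> = \<zero>\<^bsub>R\<^esub>) \<and>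
     (\<forall>\<gamma>\<in>carrier \<Gamma>. c \<gamma> \<in> D \<gamma>) \<and>
     finite {\<gamma>\<in>carrier \<Gamma>. c \<gamma> \<noteq> \<zero>\<^bsub>R\<^esub>} \<and>
     x = finsum R c {\<gamma>\<in>carrier \<Gamma>. c \<gamma> \<noteq> \<zero>\<^bsub>R\<^esub>}"

definition graded_ring ::
  "('g, 'x) monoid_scheme \<Rightarrow> ('a, 'm) ring_scheme \<Rightarrow> ('g \<Rightarrow> 'a set) \<Rightarrow> bool" where
  "graded_ring \<Gamma> R D \<longleftrightarrow>
     comm_group \<Gamma> \<and> cring R \<and>
     (\<forall>\<gamma>\<in>carrier \<Gamma>. additive_subgroup (D \<gamma>) R) \<and>
     (\<forall>\<gamma>\<in>carrier \<Gamma>. \<forall>\<delta>\<in>carrier \<Gamma>. \<forall>a\<in>D \<gamma>. \<forall>b\<in>D \<delta>.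
         a \<otimes>\<^bsub>R\<^esub> b \<in> D (\<gamma> \<otimes>\<^bsub>\<Gamma>\<^esub> \<delta>)) \<and>
     (\<forall>x\<in>carrier R. \<exists>!c. is_decomp \<Gamma> R D x c)"

definition homogeneous ::
  "('g, 'x) monoid_scheme \<Rightarrow> ('g \<Rightarrow> 'a set) \<Rightarrow> 'a \<Rightarrow> bool" where
  "homogeneous \<Gamma> D x \<longleftrightarrow> (\<exists>\<gamma>\<in>carrier \<Gamma>. x \<in> D \<gamma>)"

definition graded_field ::
  "('g, 'x) monoid_scheme \<Rightarrow> ('a, 'm) ring_scheme \<Rightarrow> ('g \<Rightarrow> 'a set) \<Rightarrow> bool" where
  "graded_field \<Gamma> R D \<longleftrightarrow> graded_ring \<Gamma> R D \<and> \<one>\<^bsub>R\<^esub> \<noteq> \<zero>\<^bsub>R\<^esub> \<and>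
     (\<forall>x\<in>carrier R. homogeneous \<Gamma> D x \<and> x \<noteq> \<zero>\<^bsub>R\<^esub> \<longrightarrow> x \<in> Units R)"

definition graded_subring ::
  "('g, 'x) monoid_scheme \<Rightarrow> ('a, 'm) ring_scheme \<Rightarrow> ('g \<Rightarrow> 'a set) \<Rightarrow> 'a set \<Rightarrow> bool" where
  "graded_subring \<Gamma> R D S \<longleftrightarrow> subring S R \<and>
     (\<forall>x\<in>S. \<forall>c. is_decomp \<Gamma> R D x c \<longrightarrow> (\<forall>\<gamma>\<in>carrier \<Gamma>. c \<gamma> \<in> S))"

definition graded_subfield ::
  "('g, 'x) monoid_scheme \<Rightarrow> ('a, 'm) ring_scheme \<Rightarrow> ('g \<Rightarrow> 'a set) \<Rightarrow> 'a set \<Rightarrow> bool" where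
  "graded_subfield \<Gamma> R D k \<longleftrightarrow> graded_subring \<Gamma> R D k \<and>
     (\<forall>x\<in>k. homogeneous \<Gamma> D x \<and> x \<noteq> \<zero>\<^bsub>R\<^esub> \<longrightarrow> inv\<^bsub>R\<^esub> x \<in> k)"

definition graded_field_ext ::
  "('g, 'x) monoid_scheme \<Rightarrow> ('a, 'm) ring_scheme \<Rightarrow> ('g \<Rightarrow> 'a set) \<Rightarrow> 'a set \<Rightarrow> bool" where
  "graded_field_ext \<Gamma> K D k \<longleftrightarrow> graded_field \<Gamma> K D \<and> graded_subfield \<Gamma> K D k"

definition graded_val_ring ::
  "('g, 'x) monoid_scheme \<Rightarrow> ('a, 'm) ring_scheme \<Rightarrow> ('g \<Rightarrow> 'a set) \<Rightarrow> 'a set \<Rightarrow> 'a set \<Rightarrow> bool" where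
  "graded_val_ring \<Gamma> K D k V \<longleftrightarrow> graded_subring \<Gamma> K D V \<and> k \<subseteq> V \<and>
     (\<forall>f\<in>carrier K. homogeneous \<Gamma> D f \<and> f \<noteq> \<zero>\<^bsub>K\<^esub> \<longrightarrow> f \<in> V \<or> inv\<^bsub>K\<^esub> f \<in> V)"

definition Pset ::
  "('g, 'x) monoid_scheme \<Rightarrow> ('a, 'm) ring_scheme \<Rightarrow> ('g \<Rightarrow> 'a set) \<Rightarrow> 'a set \<Rightarrow> 'a set set" where
  "Pset \<Gamma> K D k = {V. graded_val_ring \<Gamma> K D k V}"

definition Ptop ::
  "('g, 'x) monoid_scheme \<Rightarrow> ('a, 'm) ring_scheme \<Rightarrow> ('g \<Rightarrow> 'a set) \<Rightarrow> 'a set \<Rightarrow> 'a set topology" where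
  "Ptop \<Gamma> K D k = subtopology
     (topology_generated_by {{V. f \<in> V} | f. f \<in> carrier K \<and> homogeneous \<Gamma> D f})
     (Pset \<Gamma> K D k)"

definition quasi_separated_space :: "'x topology \<Rightarrow> bool" where
  "quasi_separated_space TX \<longleftrightarrow>
     (\<forall>U V. openin TX U \<and> compactin TX U \<and> openin TX V \<and> compactin TX V \<longrightarrow> compactin TX (U \<inter> V))"

definition local_homeomorphism_map :: "'x topology \<Rightarrow> 'y topology \<Rightarrow> ('x \<Rightarrow> 'y) \<Rightarrow> bool" where
  "local_homeomorphism_map TX T p \<longleftrightarrow> continuous_map TX T p \<and>
     (\<forall>x\<in>topspace TX. \<exists>U. openin TX U \<and> x \<in> U \<and> openin T (p ` U) \<and>
        homeomorphic_map (subtopology TX U) (subtopology T (p ` U)) p)"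

definition bir_obj ::
  "('g, 'x) monoid_scheme \<Rightarrow> ('a, 'm) ring_scheme \<Rightarrow> ('g \<Rightarrow> 'a set) \<Rightarrow> 'a set \<Rightarrow>
   'p topology \<Rightarrow> ('p \<Rightarrow> 'a set) \<Rightarrow> bool" where
  "bir_obj \<Gamma> K D k TX \<pi> \<longleftrightarrow> graded_field_ext \<Gamma> K D k \<and>
     topspace TX \<noteq> {} \<and> connected_space TX \<and> compact_space TX \<and> quasi_separated_space TX \<and>
     local_homeomorphism_map TX (Ptop \<Gamma> K D k) \<pi>"

definition graded_embedding ::
  "('g, 'x) monoid_scheme \<Rightarrow> ('a, 'm) ring_scheme \<Rightarrow> ('g \<Rightarrow> 'a set) \<Rightarrow>
   ('b, 'n) ring_scheme \<Rightarrow> ('g \<Rightarrow> 'b set) \<Rightarrow> ('a \<Rightarrow> 'b) \<Rightarrow> bool" where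
  "graded_embedding \<Gamma> K DK L DL \<phi> \<longleftrightarrow> \<phi> \<in> ring_hom K L \<and> inj_on \<phi> (carrier K) \<and>
     (\<forall>\<gamma>\<in>carrier \<Gamma>. \<phi> ` DK \<gamma> \<subseteq> DL \<gamma>)"

text \<open>psi_{L/l,K/k}: V \<mapsto> V \<inter> K (K identified with its image under \<phi>).\<close>
definition psi :: "('a, 'm) ring_scheme \<Rightarrow> ('a \<Rightarrow> 'b) \<Rightarrow> 'b set \<Rightarrow> 'a set" where
  "psi K \<phi> V = {a \<in> carrier K. \<phi> a \<in> V}"

definition bir_mor ::
  "('g, 'x) monoid_scheme \<Rightarrow>
   ('b, 'n) ring_scheme \<Rightarrow> ('g \<Rightarrow> 'b set) \<Rightarrow> 'b set \<Rightarrow> 'q topology \<Rightarrow> ('q \<Rightarrow> 'b set) \<Rightarrow>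
   ('a, 'm) ring_scheme \<Rightarrow> ('g \<Rightarrow> 'a set) \<Rightarrow> 'a set \<Rightarrow> 'p topology \<Rightarrow> ('p \<Rightarrow> 'a set) \<Rightarrow>
   ('a \<Rightarrow> 'b) \<Rightarrow> ('q \<Rightarrow> 'p) \<Rightarrow> bool" where
  "bir_mor \<Gamma> L DL l TY \<pi>TY K DK k TX \<pi>TX \<phi> u \<longleftrightarrow>
     bir_obj \<Gamma> L DL l TY \<pi>TY \<and> bir_obj \<Gamma> K DK k TX \<pi>TX \<and>
     graded_embedding \<Gamma> K DK L DL \<phi> \<and> \<phi> ` k \<subseteq> l \<and>
     continuous_map TY TX u \<and>
     (\<forall>y\<in>topspace TY. \<pi>TX (u y) = psi K \<phi> (\<pi>TY y))"

definition fibre_prod ::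
  "('b, 'n) ring_scheme \<Rightarrow> 'b set set \<Rightarrow> ('a, 'm) ring_scheme \<Rightarrow> 'p topology \<Rightarrow> ('p \<Rightarrow> 'a set) \<Rightarrow>
   ('a \<Rightarrow> 'b) \<Rightarrow> ('p \<times> 'b set) set" where
  "fibre_prod L PL K TX \<pi>TX \<phi> = {(x, V). x \<in> topspace TX \<and> V \<in> PL \<and> \<pi>TX x = psi K \<phi> V}"

definition bir_separated ::
  "('g, 'x) monoid_scheme \<Rightarrow>
   ('b, 'n) ring_scheme \<Rightarrow> ('g \<Rightarrow> 'b set) \<Rightarrow> 'b set \<Rightarrow> 'q topology \<Rightarrow> ('q \<Rightarrow> 'b set) \<Rightarrow>
   ('a, 'm) ring_scheme \<Rightarrow> ('g \<Rightarrow> 'a set) \<Rightarrow> 'a set \<Rightarrow> 'p topology \<Rightarrow> ('p \<Rightarrow> 'a set) \<Rightarrow>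
   ('a \<Rightarrow> 'b) \<Rightarrow> ('q \<Rightarrow> 'p) \<Rightarrow> bool" where
  "bir_separated \<Gamma> L DL l TY \<pi>TY K DK k TX \<pi>TX \<phi> u \<longleftrightarrow>
     inj_on (\<lambda>y. (u y, \<pi>TY y)) (topspace TY)"

definition bir_proper ::
  "('g, 'x) monoid_scheme \<Rightarrow>
   ('b, 'n) ring_scheme \<Rightarrow> ('g \<Rightarrow> 'b set) \<Rightarrow> 'b set \<Rightarrow> 'q topology \<Rightarrow> ('q \<Rightarrow> 'b set) \<Rightarrow>
   ('a, 'm) ring_scheme \<Rightarrow> ('g \<Rightarrow> 'a set) \<Rightarrow> 'a set \<Rightarrow> 'p topology \<Rightarrow> ('p \<Rightarrow> 'a set) \<Rightarrow>
   ('a \<Rightarrow> 'b) \<Rightarrow> ('q \<Rightarrow> 'p) \<Rightarrow> bool" where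
  "bir_proper \<Gamma> L DL l TY \<pi>TY K DK k TX \<pi>TX \<phi> u \<longleftrightarrow>
     bij_betw (\<lambda>y. (u y, \<pi>TY y)) (topspace TY)
        (fibre_prod L (Pset \<Gamma> L DL l) K TX \<pi>TX \<phi>) \<and>
     psi K \<phi> ` Pset \<Gamma> L DL l = Pset \<Gamma> K DK k"

end

theory Submission
  imports Defs
begin

text \<open>Write \<open>\<tilde>f z = (f z, \<pi> z)\<close> for the map into the fibre product attached to a morphism
  \<open>f\<close>. For a composite \<open>f = g \<circ> h\<close>, \<open>\<tilde>f\<close> factors as \<open>\<tilde>h\<close> followed by the base change
  \<open>(y, W) \<mapsto> (g y, W)\<close> of \<open>\<tilde>g\<close> along \<open>\<psi>\<^sub>h\<close>, because the fibre products paste: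
  \<open>X \<times>\<^bsub>P\<^sub>K\<^esub> P\<^sub>M = (X \<times>\<^bsub>P\<^sub>K\<^esub> P\<^sub>L) \<times>\<^bsub>P\<^sub>L\<^esub> P\<^sub>M\<close>. Base change preserves injectivity and
  bijectivity, and reflects them along a surjection \<open>\<psi>\<^sub>h\<close>; the six statements then follow
  from the usual cancellation rules for injective and bijective maps.\<close>

definition pullback :: "'x set \<Rightarrow> ('x \<Rightarrow> 'p) \<Rightarrow> 'v set \<Rightarrow> ('v \<Rightarrow> 'p) \<Rightarrow> ('x \<times> 'v) set" where
  "pullback SX p P \<psi> = {(x, V). x \<in> SX \<and> V \<in> P \<and> p x = \<psi> V}"

definition cartesian ::
  "'y set \<Rightarrow> ('y \<Rightarrow> 'x) \<Rightarrow> ('y \<Rightarrow> 'q) \<Rightarrow> 'x set \<Rightarrow> ('x \<Rightarrow> 'p) \<Rightarrow> 'q set \<Rightarrow> ('q \<Rightarrow> 'p) \<Rightarrow> bool" where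
  "cartesian SY u p SX q P \<psi> \<longleftrightarrow> bij_betw (\<lambda>y. (u y, p y)) SY (pullback SX q P \<psi>)"

lemma inj_on_base_change:
  assumes "inj_on (\<lambda>y. (u y, p y)) SY"
  shows "inj_on (map_prod u id) (pullback SY p P \<psi>)"
  using assms unfolding inj_on_def pullback_def by fastforce

lemma inj_on_of_base_change:
  assumes "inj_on (map_prod u id) (pullback SY p P \<psi>)" and "p ` SY \<subseteq> \<psi> ` P"
  shows "inj_on (\<lambda>y. (u y, p y)) SY"
proof (rule inj_onI)
  fix y1 y2 assume y: "y1 \<in> SY" "y2 \<in> SY" "(u y1, p y1) = (u y2, p y2)"
  obtain W where "W \<in> P" "\<psi> W = p y1" using assms(2) y(1) by force
  then have "(y1, W) \<in> pullback SY p P \<psi>" "(y2, W) \<in> pullback SY p P \<psi>"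
    using y unfolding pullback_def by auto
  moreover have "map_prod u id (y1, W) = map_prod u id (y2, W)" using y(3) by simp
  ultimately show "y1 = y2" using inj_onD[OF assms(1)] by blast
qed

lemma base_change_into:
  assumes "\<And>y. y \<in> SY \<Longrightarrow> u y \<in> SX \<and> q (u y) = \<rho> (p y)"
  shows "map_prod u id ` pullback SY p P \<psi> \<subseteq> pullback SX q P (\<rho> \<circ> \<psi>)"
  using assms unfolding pullback_def by auto

lemma base_change_onto:
  assumes "pullback SX q Q \<rho> \<subseteq> (\<lambda>y. (u y, p y)) ` SY" and "\<psi> ` P \<subseteq> Q"
  shows "pullback SX q P (\<rho> \<circ> \<psi>) \<subseteq> map_prod u id ` pullback SY p P \<psi>"
proof
  fix xW assume "xW \<in> pullback SX q P (\<rho> \<circ> \<psi>)"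
  then obtain x W where xW: "xW = (x, W)" "x \<in> SX" "W \<in> P" "q x = \<rho> (\<psi> W)"
    unfolding pullback_def by auto
  then have "(x, \<psi> W) \<in> pullback SX q Q \<rho>" using assms(2) unfolding pullback_def by auto
  then obtain y where "y \<in> SY" "u y = x" "p y = \<psi> W" using assms(1) by force
  with xW show "xW \<in> map_prod u id ` pullback SY p P \<psi>"
    unfolding pullback_def by force
qed

lemma onto_of_base_change:
  assumes "pullback SX q P (\<rho> \<circ> \<psi>) \<subseteq> map_prod u id ` pullback SY p P \<psi>" and "Q \<subseteq> \<psi> ` P"
  shows "pullback SX q Q \<rho> \<subseteq> (\<lambda>y. (u y, p y)) ` SY"
proof
  fix xV assume "xV \<in> pullback SX q Q \<rho>"
  then obtain x V where xV: "xV = (x, V)" "x \<in> SX" "V \<in> Q" "q x = \<rho> V"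
    unfolding pullback_def by auto
  obtain W where W: "W \<in> P" "\<psi> W = V" using assms(2) xV(3) by force
  with xV have "(x, W) \<in> pullback SX q P (\<rho> \<circ> \<psi>)" unfolding pullback_def by auto
  then obtain y where "y \<in> SY" "u y = x" "p y = \<psi> W" using assms(1) unfolding pullback_def by force
  with xV W show "xV \<in> (\<lambda>y. (u y, p y)) ` SY" by force
qed

locale commuting_tower =
  fixes SZ :: "'z set" and SY :: "'y set" and SX :: "'x set"
    and PZ :: "'r set" and PY :: "'q set"
    and uh :: "'z \<Rightarrow> 'y" and ug :: "'y \<Rightarrow> 'x"
    and pZ :: "'z \<Rightarrow> 'r" and pY :: "'y \<Rightarrow> 'q" and pX :: "'x \<Rightarrow> 'p"
    and \<psi>h :: "'r \<Rightarrow> 'q" and \<psi>g :: "'q \<Rightarrow> 'p"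
  assumes uh_into: "uh ` SZ \<subseteq> SY" and ug_into: "ug ` SY \<subseteq> SX"
    and pZ_into: "pZ ` SZ \<subseteq> PZ" and pY_into: "pY ` SY \<subseteq> PY"
    and commute_h: "\<And>z. z \<in> SZ \<Longrightarrow> pY (uh z) = \<psi>h (pZ z)"
    and commute_g: "\<And>y. y \<in> SY \<Longrightarrow> pX (ug y) = \<psi>g (pY y)"
begin

lemma comp_factors_through_base_change:
  "(\<lambda>z. ((ug \<circ> uh) z, pZ z)) = map_prod ug id \<circ> (\<lambda>z. (uh z, pZ z))"
  by auto

lemma h_graph_into: "(\<lambda>z. (uh z, pZ z)) ` SZ \<subseteq> pullback SY pY PZ \<psi>h"
  using uh_into pZ_into commute_h unfolding pullback_def by auto

lemma g_graph_into: "(\<lambda>y. (ug y, pY y)) ` SY \<subseteq> pullback SX pX PY \<psi>g"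
  using ug_into pY_into commute_g unfolding pullback_def by auto

lemma g_base_change_into:
  "map_prod ug id ` pullback SY pY PZ \<psi>h \<subseteq> pullback SX pX PZ (\<psi>g \<circ> \<psi>h)"
  using ug_into commute_g by (intro base_change_into) auto

lemma separated_comp:
  assumes "inj_on (\<lambda>y. (ug y, pY y)) SY" and "inj_on (\<lambda>z. (uh z, pZ z)) SZ"
  shows "inj_on (\<lambda>z. ((ug \<circ> uh) z, pZ z)) SZ"
  unfolding comp_factors_through_base_change
  using assms(2) inj_on_subset[OF inj_on_base_change[OF assms(1)] h_graph_into]
  by (rule comp_inj_on)

lemma separated_right_of_comp:
  assumes "inj_on (\<lambda>z. ((ug \<circ> uh) z, pZ z)) SZ"
  shows "inj_on (\<lambda>z. (uh z, pZ z)) SZ"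
  using assms unfolding comp_factors_through_base_change by (rule inj_on_imageI2)

lemma cartesian_comp:
  assumes "cartesian SY ug pY SX pX PY \<psi>g" and "cartesian SZ uh pZ SY pY PZ \<psi>h"
    and "\<psi>h ` PZ \<subseteq> PY"
  shows "cartesian SZ (ug \<circ> uh) pZ SX pX PZ (\<psi>g \<circ> \<psi>h)"
proof -
  have g_inj: "inj_on (\<lambda>y. (ug y, pY y)) SY"
    and g_onto: "pullback SX pX PY \<psi>g \<subseteq> (\<lambda>y. (ug y, pY y)) ` SY"
    using assms(1) unfolding cartesian_def bij_betw_def by auto
  have "map_prod ug id ` pullback SY pY PZ \<psi>h = pullback SX pX PZ (\<psi>g \<circ> \<psi>h)"
    using g_base_change_into base_change_onto[OF g_onto assms(3)] by (rule subset_antisym)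
  with inj_on_base_change[OF g_inj]
  have "bij_betw (map_prod ug id) (pullback SY pY PZ \<psi>h) (pullback SX pX PZ (\<psi>g \<circ> \<psi>h))"
    unfolding bij_betw_def ..
  with assms(2) show ?thesis
    unfolding cartesian_def comp_factors_through_base_change by (rule bij_betw_trans)
qed

lemma bij_betw_base_change_of_cartesian:
  assumes "cartesian SZ (ug \<circ> uh) pZ SX pX PZ (\<psi>g \<circ> \<psi>h)"
    and "cartesian SZ uh pZ SY pY PZ \<psi>h"
  shows "bij_betw (map_prod ug id) (pullback SY pY PZ \<psi>h) (pullback SX pX PZ (\<psi>g \<circ> \<psi>h))"
proof -
  have "bij_betw (\<lambda>z. (uh z, pZ z)) SZ (pullback SY pY PZ \<psi>h)"
    using assms(2) unfolding cartesian_def .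
  moreover have "bij_betw (map_prod ug id \<circ> (\<lambda>z. (uh z, pZ z))) SZ (pullback SX pX PZ (\<psi>g \<circ> \<psi>h))"
    using assms(1) unfolding cartesian_def comp_factors_through_base_change .
  ultimately show ?thesis using bij_betw_comp_iff by blast
qed

lemma cartesian_left_of_comp:
  assumes "cartesian SZ (ug \<circ> uh) pZ SX pX PZ (\<psi>g \<circ> \<psi>h)"
    and "cartesian SZ uh pZ SY pY PZ \<psi>h" and "PY \<subseteq> \<psi>h ` PZ"
  shows "cartesian SY ug pY SX pX PY \<psi>g"
proof -
  have \<beta>_inj: "inj_on (map_prod ug id) (pullback SY pY PZ \<psi>h)"
    and \<beta>_onto: "pullback SX pX PZ (\<psi>g \<circ> \<psi>h) \<subseteq> map_prod ug id ` pullback SY pY PZ \<psi>h"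
    using bij_betw_base_change_of_cartesian[OF assms(1,2)] unfolding bij_betw_def by auto
  have "inj_on (\<lambda>y. (ug y, pY y)) SY"
    using \<beta>_inj pY_into assms(3) by (rule inj_on_of_base_change[OF _ subset_trans])
  moreover have "pullback SX pX PY \<psi>g \<subseteq> (\<lambda>y. (ug y, pY y)) ` SY"
    using \<beta>_onto assms(3) by (rule onto_of_base_change)
  ultimately show ?thesis
    using g_graph_into unfolding cartesian_def bij_betw_def by (simp add: subset_antisym)
qed

lemma cartesian_right_of_comp:
  assumes "cartesian SZ (ug \<circ> uh) pZ SX pX PZ (\<psi>g \<circ> \<psi>h)"
    and "inj_on (\<lambda>y. (ug y, pY y)) SY"
  shows "cartesian SZ uh pZ SY pY PZ \<psi>h"
proof -
  have f: "bij_betw (map_prod ug id \<circ> (\<lambda>z. (uh z, pZ z))) SZ (pullback SX pX PZ (\<psi>g \<circ> \<psi>h))"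
    using assms(1) unfolding cartesian_def comp_factors_through_base_change .
  then have "pullback SX pX PZ (\<psi>g \<circ> \<psi>h) = map_prod ug id ` (\<lambda>z. (uh z, pZ z)) ` SZ"
    unfolding bij_betw_def image_comp by simp
  also have "\<dots> \<subseteq> map_prod ug id ` pullback SY pY PZ \<psi>h"
    using h_graph_into by (rule image_mono)
  finally have "bij_betw (map_prod ug id) (pullback SY pY PZ \<psi>h) (pullback SX pX PZ (\<psi>g \<circ> \<psi>h))"
    using inj_on_base_change[OF assms(2)] g_base_change_into
    unfolding bij_betw_def by (simp add: subset_antisym)
  with f show ?thesis
    unfolding cartesian_def using bij_betw_comp_iff2 h_graph_into by blast
qed

lemma separated_left_of_comp:
  assumes "inj_on (\<lambda>z. ((ug \<circ> uh) z, pZ z)) SZ"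
    and "cartesian SZ uh pZ SY pY PZ \<psi>h" and "PY \<subseteq> \<psi>h ` PZ"
  shows "inj_on (\<lambda>y. (ug y, pY y)) SY"
proof -
  have "(\<lambda>z. (uh z, pZ z)) ` SZ = pullback SY pY PZ \<psi>h"
    using assms(2) unfolding cartesian_def bij_betw_def by blast
  then have "inj_on (map_prod ug id) (pullback SY pY PZ \<psi>h)"
    using inj_on_imageI[of "map_prod ug id" "\<lambda>z. (uh z, pZ z)" SZ] assms(1)
    unfolding comp_factors_through_base_change by simp
  then show ?thesis
    using inj_on_of_base_change pY_into assms(3) by blast
qed

end

lemma bir_obj_Pset:
  assumes "bir_obj \<Gamma> K D k TX \<pi>"
  shows "\<pi> ` topspace TX \<subseteq> Pset \<Gamma> K D k"
proof -
  have "continuous_map TX (Ptop \<Gamma> K D k) \<pi>"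
    using assms unfolding bir_obj_def local_homeomorphism_map_def by blast
  then show ?thesis
    unfolding continuous_map_def Ptop_def by auto
qed

lemma psi_comp:
  assumes "graded_embedding \<Gamma> K DK L DL \<phi>"
  shows "psi K (\<phi>' \<circ> \<phi>) = psi K \<phi> \<circ> psi L \<phi>'"
proof -
  have "\<phi> \<in> carrier K \<rightarrow> carrier L"
    using assms unfolding graded_embedding_def ring_hom_def by blast
  then show ?thesis unfolding psi_def by fastforce
qed

lemma fibre_prod_eq_pullback:
  "fibre_prod L PL K TX \<pi>TX \<phi> = pullback (topspace TX) \<pi>TX PL (psi K \<phi>)"
  unfolding fibre_prod_def pullback_def by simp

lemma bir_proper_iff_cartesian:
  "bir_proper \<Gamma> L DL l TY \<pi>TY K DK k TX \<pi>TX \<phi> u \<longleftrightarrow>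
     cartesian (topspace TY) u \<pi>TY (topspace TX) \<pi>TX (Pset \<Gamma> L DL l) (psi K \<phi>) \<and>
     psi K \<phi> ` Pset \<Gamma> L DL l = Pset \<Gamma> K DK k"
  unfolding bir_proper_def cartesian_def fibre_prod_eq_pullback ..

lemma bir_mor_commuting_tower:
  assumes "bir_mor \<Gamma> M DM m TZ \<pi>TZ L DL l TY \<pi>TY \<phi>h uh"
    and "bir_mor \<Gamma> L DL l TY \<pi>TY K DK k TX \<pi>TX \<phi>g ug"
  shows "commuting_tower (topspace TZ) (topspace TY) (topspace TX)
           (Pset \<Gamma> M DM m) (Pset \<Gamma> L DL l) uh ug \<pi>TZ \<pi>TY \<pi>TX (psi L \<phi>h) (psi K \<phi>g)"
  using assms bir_obj_Pset continuous_map_image_subset_topspace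
  unfolding bir_mor_def commuting_tower_def by metis

theorem lemma7p2:
  fixes \<Gamma> :: "'g monoid"
    and M :: "'c ring" and DM :: "'g \<Rightarrow> 'c set" and m :: "'c set"
    and TZ :: "'z topology" and \<pi>TZ :: "'z \<Rightarrow> 'c set"
    and L :: "'b ring" and DL :: "'g \<Rightarrow> 'b set" and l :: "'b set"
    and TY :: "'y topology" and \<pi>TY :: "'y \<Rightarrow> 'b set"
    and K :: "'a ring" and DK :: "'g \<Rightarrow> 'a set" and k :: "'a set"
    and TX :: "'x topology" and \<pi>TX :: "'x \<Rightarrow> 'a set"
    and \<phi>h :: "'b \<Rightarrow> 'c" and uh :: "'z \<Rightarrow> 'y"
    and \<phi>g :: "'a \<Rightarrow> 'b" and ug :: "'y \<Rightarrow> 'x"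
  assumes h: "bir_mor \<Gamma> M DM m TZ \<pi>TZ L DL l TY \<pi>TY \<phi>h uh"
    and g: "bir_mor \<Gamma> L DL l TY \<pi>TY K DK k TX \<pi>TX \<phi>g ug"
  shows
    "(bir_separated \<Gamma> L DL l TY \<pi>TY K DK k TX \<pi>TX \<phi>g ug \<and>
      bir_separated \<Gamma> M DM m TZ \<pi>TZ L DL l TY \<pi>TY \<phi>h uh \<longrightarrow>
      bir_separated \<Gamma> M DM m TZ \<pi>TZ K DK k TX \<pi>TX (\<phi>h \<circ> \<phi>g) (ug \<circ> uh))
   \<and> (bir_separated \<Gamma> M DM m TZ \<pi>TZ K DK k TX \<pi>TX (\<phi>h \<circ> \<phi>g) (ug \<circ> uh) \<longrightarrow>
      bir_separated \<Gamma> M DM m TZ \<pi>TZ L DL l TY \<pi>TY \<phi>h uh)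
   \<and> (bir_proper \<Gamma> L DL l TY \<pi>TY K DK k TX \<pi>TX \<phi>g ug \<and>
      bir_proper \<Gamma> M DM m TZ \<pi>TZ L DL l TY \<pi>TY \<phi>h uh \<longrightarrow>
      bir_proper \<Gamma> M DM m TZ \<pi>TZ K DK k TX \<pi>TX (\<phi>h \<circ> \<phi>g) (ug \<circ> uh))
   \<and> (bir_proper \<Gamma> M DM m TZ \<pi>TZ K DK k TX \<pi>TX (\<phi>h \<circ> \<phi>g) (ug \<circ> uh) \<and>
      bir_proper \<Gamma> M DM m TZ \<pi>TZ L DL l TY \<pi>TY \<phi>h uh \<longrightarrow>
      bir_proper \<Gamma> L DL l TY \<pi>TY K DK k TX \<pi>TX \<phi>g ug)
   \<and> (bir_proper \<Gamma> M DM m TZ \<pi>TZ K DK k TX \<pi>TX (\<phi>h \<circ> \<phi>g) (ug \<circ> uh) \<and>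
      bir_separated \<Gamma> L DL l TY \<pi>TY K DK k TX \<pi>TX \<phi>g ug \<and>
      psi L \<phi>h ` Pset \<Gamma> M DM m = Pset \<Gamma> L DL l \<longrightarrow>
      bir_proper \<Gamma> M DM m TZ \<pi>TZ L DL l TY \<pi>TY \<phi>h uh)
   \<and> (bir_separated \<Gamma> M DM m TZ \<pi>TZ K DK k TX \<pi>TX (\<phi>h \<circ> \<phi>g) (ug \<circ> uh) \<and>
      bir_proper \<Gamma> M DM m TZ \<pi>TZ L DL l TY \<pi>TY \<phi>h uh \<longrightarrow>
      bir_separated \<Gamma> L DL l TY \<pi>TY K DK k TX \<pi>TX \<phi>g ug)"
proof -
  interpret commuting_tower "topspace TZ" "topspace TY" "topspace TX"
    "Pset \<Gamma> M DM m" "Pset \<Gamma> L DL l" uh ug \<pi>TZ \<pi>TY \<pi>TX "psi L \<phi>h" "psi K \<phi>g"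
    using bir_mor_commuting_tower[OF h g] .
  have psi_f: "psi K (\<phi>h \<circ> \<phi>g) = psi K \<phi>g \<circ> psi L \<phi>h"
    using g unfolding bir_mor_def by (blast intro: psi_comp)
  then have psi_f_image: "psi K (\<phi>h \<circ> \<phi>g) ` Pset \<Gamma> M DM m = psi K \<phi>g ` psi L \<phi>h ` Pset \<Gamma> M DM m"
    by (simp add: image_comp)
  show ?thesis
    unfolding bir_separated_def bir_proper_iff_cartesian psi_f_image
    unfolding psi_f
    by (intro conjI impI; (elim conjE)?; metis order_refl separated_comp separated_right_of_comp
        cartesian_comp cartesian_left_of_comp cartesian_right_of_comp separated_left_of_comp)
qed

end
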